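(* Let $s,t\in\mathbb N$ and let $\sigma$ be an $s$-core. For $k\in\mathbb N$ let $$N_\sigma(k)=\#\{\lambda\in\mathcal C_{st}\ :\ \mathrm{core}_s\lambda=\sigma,\ \ell(\lambda)\le k\}.$$ Then there is a quasipolynomial $Q_\sigma(k)$ of degree $s(t-1)$ and period $s$ such that $N_\sigma(k)=Q_\sigma(k)$ for all integers $k\ge\ell(\sigma)$. The leading coefficient of $Q_\sigma$ is $\dfrac{1}{((t-1)!)^s}$.
   Context: A partition $\lambda=(a_1,\dots,a_\ell)$ is a weakly decreasing finite sequence of positive integers; $\ell(\lambda)=\ell$ is its length (the empty partition has length $0$). For $t\in\mathbb N$, a $t$-core is a partition whose Young diagram contains no hook of size (hooklength) $t$; $\mathcal C_t$ denotes the set of $t$-cores. $\mathrm{core}_t\lambda$ is the partition obtained from $\lambda$ by successively removing rim hooks (border strips) of size $t$ until none remain (independent of choices). A function $Q:\mathbb N\to\mathbb Q$ is a quasipolynomial of period $p$ if for each $0\le i<p$ the function $n\mapsto Q(i+np)$ ($n\ge 0$) is a polynomial $P_i$; its degree is the maximum degree of the $P_i$. "The leading coefficient of $Q$ is $c$" means each $P_i$ (for the stated period) has degree equal to that of $Q$ and leading coefficient $c$. *)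

theory Defs
  imports Main "HOL-Computational_Algebra.Polynomial"
begin

text \<open>Partitions as weakly decreasing lists of positive naturals (0-indexed rows/columns).\<close>
definition is_partition :: "nat list \<Rightarrow> bool" where
  "is_partition la \<longleftrightarrow> sorted_wrt (\<ge>) la \<and> (\<forall>x\<in>set la. 0 < x)"

definition young_diagram :: "nat list \<Rightarrow> (nat \<times> nat) set" where
  "young_diagram la = {(i, j). i < length la \<and> j < la ! i}"

definition conj_part :: "nat list \<Rightarrow> nat \<Rightarrow> nat" where
  "conj_part la j = length (filter (\<lambda>x. j < x) la)"

definition hook_length :: "nat list \<Rightarrow> nat \<Rightarrow> nat \<Rightarrow> nat" where
  "hook_length la i j = (la ! i - Suc j) + (conj_part la j - Suc i) + 1"

definition is_core :: "nat \<Rightarrow> nat list \<Rightarrow> bool" where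
  "is_core t la \<longleftrightarrow> is_partition la \<and>
     \<not> (\<exists>(i, j) \<in> young_diagram la. hook_length la i j = t)"

definition cells_adjacent :: "nat \<times> nat \<Rightarrow> nat \<times> nat \<Rightarrow> bool" where
  "cells_adjacent c d \<longleftrightarrow>
     (fst c = fst d \<and> (snd d = Suc (snd c) \<or> snd c = Suc (snd d))) \<or>
     (snd c = snd d \<and> (fst d = Suc (fst c) \<or> fst c = Suc (fst d)))"

definition cells_connected :: "(nat \<times> nat) set \<Rightarrow> bool" where
  "cells_connected S \<longleftrightarrow>
     (\<forall>c\<in>S. \<forall>d\<in>S. (\<lambda>x y. x \<in> S \<and> y \<in> S \<and> cells_adjacent x y)\<^sup>*\<^sup>* c d)"

definition no_2x2_square :: "(nat \<times> nat) set \<Rightarrow> bool" where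
  "no_2x2_square S \<longleftrightarrow>
     \<not> (\<exists>i j. (i, j) \<in> S \<and> (Suc i, j) \<in> S \<and> (i, Suc j) \<in> S \<and> (Suc i, Suc j) \<in> S)"

definition removes_rim_hook :: "nat \<Rightarrow> nat list \<Rightarrow> nat list \<Rightarrow> bool" where
  "removes_rim_hook t la mu \<longleftrightarrow>
     is_partition la \<and> is_partition mu \<and>
     young_diagram mu \<subseteq> young_diagram la \<and>
     card (young_diagram la - young_diagram mu) = t \<and>
     young_diagram la - young_diagram mu \<noteq> {} \<and>
     cells_connected (young_diagram la - young_diagram mu) \<and>
     no_2x2_square (young_diagram la - young_diagram mu)"

definition core :: "nat \<Rightarrow> nat list \<Rightarrow> nat list" where
  "core t la = (THE mu. (removes_rim_hook t)\<^sup>*\<^sup>* la mu \<and> \<not> (\<exists>nu. removes_rim_hook t mu nu))"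

end

theory Submission
  imports Defs "HOL-Library.FuncSet"
begin

text \<open>A partition \<open>la\<close> with at most \<open>k\<close> parts is encoded by its beta set
  \<open>{la\<^sub>i + k - 1 - i | i < k}\<close>, a \<open>k\<close>-element set of naturals (beads on an abacus), and
  every \<open>k\<close>-element set arises this way. A hook of length \<open>h\<close> corresponds to a bead \<open>x\<close>
  with \<open>x - h\<close> empty, and removing a rim hook of size \<open>h\<close> moves such a bead to \<open>x - h\<close>.
  Hence \<open>la\<close> is an \<open>h\<close>-core iff its beta set is closed under subtracting \<open>h\<close>, bead moves
  preserve the number of beads on each runner (residue class mod \<open>s\<close>), and \<open>core\<^sub>s la\<close>
  is the unique \<open>s\<close>-closed set with the same runner counts as \<open>la\<close>.

  An \<open>st\<close>-closed set is determined by its \<open>st\<close>-runner counts, which are arbitrary. The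
  condition \<open>core\<^sub>s la = sigma\<close> prescribes, for each \<open>s\<close>-runner \<open>\<rho>\<close>, the sum \<open>d\<^sub>\<rho>\<close> of the
  counts on the \<open>t\<close> finer runners \<open>\<rho> + s q\<close>, so there are
  \<open>\<Prod>\<^sub>\<rho> C(d\<^sub>\<rho> + t - 1, t - 1)\<close> such partitions. Adding \<open>s\<close> beads to the abacus of
  \<open>sigma\<close> adds one bead to every runner, so for \<open>k = i + n s\<close> each \<open>d\<^sub>\<rho>\<close> is \<open>n\<close> plus a
  constant and the product is a polynomial in \<open>n\<close> of degree \<open>s (t - 1)\<close> with leading
  coefficient \<open>1 / (t - 1)!\<^sup>s\<close>.\<close>

section \<open>Beta sets\<close>

definition part :: "nat list \<Rightarrow> nat \<Rightarrow> nat" where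
  "part la i = (if i < length la then la ! i else 0)"

definition beta_num :: "nat \<Rightarrow> nat list \<Rightarrow> nat \<Rightarrow> nat" where
  "beta_num k la i = part la i + (k - Suc i)"

definition beta_set :: "nat \<Rightarrow> nat list \<Rightarrow> nat set" where
  "beta_set k la = beta_num k la ` {..<k}"

lemma part_antimono:
  assumes "is_partition la" "i \<le> j"
  shows "part la j \<le> part la i"
proof (cases "j < length la")
  case True
  moreover have "sorted_wrt (\<ge>) la" using assms(1) unfolding is_partition_def by simp
  ultimately show ?thesis using assms(2) unfolding part_def
    by (cases "i = j") (auto simp: sorted_wrt_iff_nth_less)
qed (simp add: part_def)

lemma part_pos_iff:
  assumes "is_partition la"
  shows "0 < part la i \<longleftrightarrow> i < length la"
  using assms unfolding is_partition_def part_def by (auto simp: nth_mem)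

lemma young_diagram_eq_part: "young_diagram la = {(i, j). j < part la i}"
  unfolding young_diagram_def part_def by (auto split: if_splits)

lemma finite_young_diagram: "finite (young_diagram la)"
proof -
  have "young_diagram la = Sigma {..<length la} (\<lambda>i. {..<la ! i})"
    unfolding young_diagram_def by auto
  then show ?thesis by simp
qed

lemma partition_eqI:
  assumes "is_partition la" "is_partition mu" "\<And>i. part la i = part mu i"
  shows "la = mu"
proof -
  have "length la = length mu"
    using assms part_pos_iff by (metis linorder_neqE_nat less_irrefl)
  then show ?thesis using assms(3) unfolding part_def by (metis nth_equalityI)
qed

lemma down_closed_eq_lessThan:
  fixes A :: "nat set"
  assumes "finite A" "\<And>i j. j \<in> A \<Longrightarrow> i \<le> j \<Longrightarrow> i \<in> A"
  shows "A = {..<card A}"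
proof (cases "A = {}")
  case False
  then have "A = {..Max A}"
    using assms by (auto intro: Max_ge Max_in)
  then show ?thesis by (metis card_atMost lessThan_Suc_atMost)
qed simp

lemma ex_partition_part_eq:
  fixes v :: "nat \<Rightarrow> nat"
  assumes "\<And>i j. i \<le> j \<Longrightarrow> v j \<le> v i" "\<And>i. k \<le> i \<Longrightarrow> v i = 0"
  shows "\<exists>la. is_partition la \<and> length la \<le> k \<and> (\<forall>i. part la i = v i)"
proof -
  define A where "A = {i. 0 < v i}"
  have Ak: "A \<subseteq> {..<k}" using assms(2) unfolding A_def by (auto, metis not_less neq0_conv)
  then have "finite A" using finite_subset by blast
  then have "A = {..<card A}"
    by (rule down_closed_eq_lessThan) (use assms(1) in \<open>auto simp: A_def intro: less_le_trans\<close>)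
  define m where "m = card A"
  have "m \<le> k" unfolding m_def using Ak by (metis card_lessThan card_mono finite_lessThan)
  moreover have pos: "\<And>i. 0 < v i \<longleftrightarrow> i < m"
    using \<open>A = {..<card A}\<close> unfolding m_def A_def by blast
  moreover have "is_partition (map v [0..<m])"
    unfolding is_partition_def using pos assms(1) by (auto simp: sorted_wrt_iff_nth_less)
  moreover have "\<forall>i. part (map v [0..<m]) i = v i"
    unfolding part_def using pos by auto
  ultimately show ?thesis by (intro exI[of _ "map v [0..<m]"]) auto
qed

lemma beta_num_decreasing:
  assumes "is_partition la" "i < j" "j < k"
  shows "beta_num k la j < beta_num k la i"
  using part_antimono[OF assms(1), of i j] assms(2,3) unfolding beta_num_def by simp

lemma inj_on_beta_num: "is_partition la \<Longrightarrow> inj_on (beta_num k la) {..<k}"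
  unfolding inj_on_def by (metis beta_num_decreasing lessThan_iff linorder_neqE_nat less_irrefl)

lemma card_beta_set: "is_partition la \<Longrightarrow> card (beta_set k la) = k"
  unfolding beta_set_def using inj_on_beta_num card_image by fastforce

lemma finite_beta_set [simp]: "finite (beta_set k la)"
  unfolding beta_set_def by simp

lemma card_greater_decreasing:
  fixes f :: "nat \<Rightarrow> 'a::linorder"
  assumes "\<And>i j. i < j \<Longrightarrow> j < k \<Longrightarrow> f j < f i" "i < k"
  shows "card {y \<in> f ` {..<k}. f i < y} = i"
proof -
  have "{y \<in> f ` {..<k}. f i < y} = f ` {..<i}"
  proof (intro equalityI subsetI)
    fix y assume "y \<in> {y \<in> f ` {..<k}. f i < y}"
    then obtain j where j: "j < k" "y = f j" "f i < f j" by auto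
    then have "j < i" using assms(1)[of i j] by (metis less_asym linorder_neqE_nat)
    then show "y \<in> f ` {..<i}" using j by auto
  qed (use assms in auto)
  moreover have "inj_on f {..<i}"
    unfolding inj_on_def using assms
    by (metis lessThan_iff linorder_neqE_nat order.strict_trans less_irrefl)
  ultimately show ?thesis by (simp add: card_image)
qed

lemma decreasing_image_eqD:
  fixes f g :: "nat \<Rightarrow> 'a::linorder"
  assumes "\<And>i j. i < j \<Longrightarrow> j < k \<Longrightarrow> f j < f i"
    and "\<And>i j. i < j \<Longrightarrow> j < k \<Longrightarrow> g j < g i"
    and "f ` {..<k} = g ` {..<k}" "i < k"
  shows "f i = g i"
proof -
  have "f i \<in> g ` {..<k}" using assms(3,4) by auto
  then obtain i' where i': "i' < k" "f i = g i'" by auto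
  have "i' = i"
    using card_greater_decreasing[of k f i, OF assms(1,4)] card_greater_decreasing[of k g i', OF assms(2) i'(1)]
      assms(3) i'(2) by simp
  then show ?thesis using i' by simp
qed

lemma beta_set_inj:
  assumes "is_partition la" "is_partition mu" "length la \<le> k" "length mu \<le> k"
    and "beta_set k la = beta_set k mu"
  shows "la = mu"
proof (rule partition_eqI[OF assms(1,2)])
  fix i
  show "part la i = part mu i"
  proof (cases "i < k")
    case True
    have "beta_num k la i = beta_num k mu i"
      by (rule decreasing_image_eqD[of k])
        (use assms beta_num_decreasing True in \<open>auto simp: beta_set_def\<close>)
    then show ?thesis unfolding beta_num_def by simp
  qed (use assms(3,4) in \<open>simp add: part_def\<close>)
qed

lemma ex_partition_beta_set_eq:
  assumes "finite X" "card X = k"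
  shows "\<exists>la. is_partition la \<and> length la \<le> k \<and> beta_set k la = X"
proof -
  define xs where "xs = sorted_list_of_set X"
  have lxs: "length xs = k" and sxs: "sorted_wrt (<) xs" and "set xs = X"
    using assms unfolding xs_def by simp_all
  define f where "f i = xs ! (k - Suc i)" for i
  have fdec: "f j < f i" if "i < j" "j < k" for i j
    unfolding f_def using sxs lxs that by (auto simp: sorted_wrt_iff_nth_less)
  have fge: "k - Suc i \<le> f i" if "i < k" for i
    using that
  proof (induction "k - Suc i" arbitrary: i)
    case (Suc n)
    then have "f (Suc i) < f i" using fdec by simp
    moreover have "k - Suc (Suc i) \<le> f (Suc i)" using Suc by simp
    ultimately show ?case using Suc(2) by simp
  qed simp
  define v where "v i = (if i < k then f i - (k - Suc i) else 0)" for i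
  have "v (Suc i) \<le> v i" for i
  proof (cases "Suc i < k")
    case True
    then show ?thesis unfolding v_def using fdec[of i "Suc i"] fge[of "Suc i"] by simp
  qed (simp add: v_def)
  then have "v j \<le> v i" if "i \<le> j" for i j
    using that by (metis antimono_iff_le_Suc antimonoD)
  then obtain la where la: "is_partition la" "length la \<le> k" "\<forall>i. part la i = v i"
    using ex_partition_part_eq[of v k] unfolding v_def by fastforce
  have "beta_num k la i = f i" if "i < k" for i
    unfolding beta_num_def using la(3) fge[OF that] that unfolding v_def by simp
  then have "beta_set k la = f ` {..<k}" unfolding beta_set_def by simp
  also have "\<dots> = (\<lambda>i. xs ! i) ` ((\<lambda>i. k - Suc i) ` {..<k})" unfolding f_def by auto
  also have "(\<lambda>i. k - Suc i) ` {..<k} = {..<k}"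
  proof (intro equalityI subsetI)
    fix x assume "x \<in> {..<k}"
    then have "x = k - Suc (k - Suc x)" "k - Suc x < k" by auto
    then show "x \<in> (\<lambda>i. k - Suc i) ` {..<k}" by blast
  qed auto
  also have "(\<lambda>i. xs ! i) ` {..<k} = X"
    using lxs \<open>set xs = X\<close> by (auto simp: set_conv_nth lessThan_def)
  finally show ?thesis using la by auto
qed

section \<open>Hooks and cores\<close>

definition minus_closed :: "nat \<Rightarrow> nat set \<Rightarrow> bool" where
  "minus_closed h X \<longleftrightarrow> (\<forall>x\<in>X. h \<le> x \<longrightarrow> x - h \<in> X)"

lemma less_conj_part_iff:
  assumes "is_partition la"
  shows "r < conj_part la j \<longleftrightarrow> j < part la r"
proof -
  have "conj_part la j = card {r. j < part la r}"
    unfolding conj_part_def length_filter_conv_card part_def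
    by (rule arg_cong[where f=card]) auto
  moreover have "{r. j < part la r} = {..<card {r. j < part la r}}"
  proof (rule down_closed_eq_lessThan)
    show "finite {r. j < part la r}"
      by (rule finite_subset[of _ "{..<length la}"]) (auto simp: part_def split: if_splits)
  next
    fix a b assume "b \<in> {r. j < part la r}" "a \<le> b"
    then show "a \<in> {r. j < part la r}" using part_antimono[OF assms, of a b] by auto
  qed
  ultimately show ?thesis by auto
qed

text \<open>A gap \<open>y\<close> of the beta set with \<open>c\<close> beads above it sits in column \<open>y - (k - c)\<close>,
  between the rows \<open>c - 1\<close> and \<open>c\<close> of the diagram.\<close>

lemma beads_above_gap:
  assumes la: "is_partition la" "length la \<le> k" and y: "y \<notin> beta_set k la"
  defines "c \<equiv> card {r. r < k \<and> y < beta_num k la r}"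
  shows "\<And>r. r < c \<longleftrightarrow> r < k \<and> y < beta_num k la r"
    and "c \<le> k" and "k - c \<le> y" and "part la c \<le> y - (k - c)"
    and "0 < c \<Longrightarrow> y - (k - c) < part la (c - 1)"
proof -
  have eq: "{r. r < k \<and> y < beta_num k la r} = {..<c}"
    unfolding c_def
  proof (rule down_closed_eq_lessThan)
    fix a b assume "b \<in> {r. r < k \<and> y < beta_num k la r}" "a \<le> b"
    then show "a \<in> {r. r < k \<and> y < beta_num k la r}"
      using beta_num_decreasing[OF la(1), of a b k] by (cases "a = b") auto
  qed simp
  show r: "r < c \<longleftrightarrow> r < k \<and> y < beta_num k la r" for r using eq by blast
  show ck: "c \<le> k" using r[of k] by (metis le_less_linear less_irrefl_nat r)
  have below: "beta_num k la c < y" if "c < k"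
  proof -
    have "beta_num k la c \<noteq> y" using y that unfolding beta_set_def by auto
    moreover have "\<not> y < beta_num k la c" using r[of c] that by simp
    ultimately show ?thesis by simp
  qed
  show ky: "k - c \<le> y"
    using below unfolding beta_num_def by (cases "c < k") auto
  show "part la c \<le> y - (k - c)"
  proof (cases "c < k")
    case False then have "part la c = 0" using la(2) unfolding part_def by simp
    then show ?thesis by simp
  qed (use below ky in \<open>simp add: beta_num_def\<close>)
  show "y - (k - c) < part la (c - 1)" if "0 < c"
  proof -
    have "y < part la (c - 1) + (k - c)" using r[of "c - 1"] that ck unfolding beta_num_def by simp
    then show ?thesis using ky by linarith
  qed
qed

lemma gap_below_hook_bead:
  assumes la: "is_partition la" "length la \<le> k" and ij: "(i, j) \<in> young_diagram la"
  defines "h \<equiv> hook_length la i j"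
  shows "i < k" and "h \<le> beta_num k la i" and "beta_num k la i - h \<notin> beta_set k la"
proof -
  have j: "j < part la i" using ij unfolding young_diagram_eq_part by simp
  define c where "c = conj_part la j"
  have cr: "r < c \<longleftrightarrow> j < part la r" for r using less_conj_part_iff[OF la(1)] c_def by simp
  have ic: "i < c" using cr j by simp
  have ck: "c \<le> k"
  proof (rule ccontr)
    assume "\<not> c \<le> k"
    then have "j < part la k" using cr[of k] by simp
    then show False using la(2) unfolding part_def by simp
  qed
  then show "i < k" using ic by simp
  have "i < length la" using j unfolding part_def by (simp split: if_splits)
  then have hk: "h = (part la i - Suc j) + (c - Suc i) + 1"
    unfolding h_def hook_length_def c_def part_def by simp
  define y where "y = j + (k - c)"
  have "y \<notin> beta_set k la"
  proof
    assume "y \<in> beta_set k la"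
    then obtain r where "r < k" "beta_num k la r = y" unfolding beta_set_def by auto
    then show False
      using cr[of r] ck unfolding beta_num_def y_def by (cases "r < c") auto
  qed
  moreover have "beta_num k la i - h = y" "h \<le> beta_num k la i"
    using j hk ic ck unfolding beta_num_def y_def by auto
  ultimately show "h \<le> beta_num k la i" "beta_num k la i - h \<notin> beta_set k la" by simp_all
qed

lemma hook_above_gap:
  assumes la: "is_partition la" "length la \<le> k" and "i < k" "0 < h"
    and hx: "h \<le> beta_num k la i" and gap: "beta_num k la i - h \<notin> beta_set k la"
  shows "\<exists>j. (i, j) \<in> young_diagram la \<and> hook_length la i j = h"
proof -
  define y where "y = beta_num k la i - h"
  define c where "c = card {r. r < k \<and> y < beta_num k la r}"
  note above = beads_above_gap[OF la gap[folded y_def], folded c_def]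
  have ic: "i < c" using above(1)[of i] assms(3,4) hx unfolding y_def by simp
  define j where "j = y - (k - c)"
  have j_last: "j < part la (c - 1)" using above(5) ic unfolding j_def by simp
  moreover have "i \<le> c - 1" using ic by simp
  ultimately have ji: "j < part la i" using part_antimono[OF la(1), of i "c - 1"] by simp
  have "r < conj_part la j \<longleftrightarrow> r < c" for r
  proof
    assume "r < conj_part la j"
    then have "j < part la r" using less_conj_part_iff[OF la(1)] by simp
    then show "r < c" using above(4) part_antimono[OF la(1), of c r] unfolding j_def
      by (metis le_less_linear less_le_trans not_less)
  next
    assume "r < c"
    then have "r \<le> c - 1" by simp
    then show "r < conj_part la j"
      using less_conj_part_iff[OF la(1)] j_last part_antimono[OF la(1), of r "c - 1"] by simp
  qed
  then have "conj_part la j = c" by (metis less_irrefl_nat linorder_neqE_nat)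
  moreover have "i < length la" using ji unfolding part_def by (simp split: if_splits)
  ultimately have "hook_length la i j = (part la i - Suc j) + (c - Suc i) + 1"
    unfolding hook_length_def part_def by simp
  also have "\<dots> = h"
    using ji ic above(2,3) hx unfolding j_def y_def beta_num_def by simp
  finally show ?thesis using ji unfolding young_diagram_eq_part by auto
qed

lemma is_core_iff_minus_closed:
  assumes la: "is_partition la" "length la \<le> k" and "0 < h"
  shows "is_core h la \<longleftrightarrow> minus_closed h (beta_set k la)"
proof
  assume core: "is_core h la"
  show "minus_closed h (beta_set k la)"
  proof (rule ccontr)
    assume "\<not> minus_closed h (beta_set k la)"
    then obtain i where "i < k" "h \<le> beta_num k la i" "beta_num k la i - h \<notin> beta_set k la"
      unfolding minus_closed_def beta_set_def by auto
    then obtain j where "(i, j) \<in> young_diagram la" "hook_length la i j = h"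
      using hook_above_gap[OF la _ \<open>0 < h\<close>] by blast
    then show False using core unfolding is_core_def by blast
  qed
next
  assume closed: "minus_closed h (beta_set k la)"
  have "hook_length la i j \<noteq> h" if "(i, j) \<in> young_diagram la" for i j
  proof
    assume "hook_length la i j = h"
    moreover note gap = gap_below_hook_bead[OF la that]
    moreover have "beta_num k la i \<in> beta_set k la" using gap(1) unfolding beta_set_def by simp
    ultimately show False using closed unfolding minus_closed_def by blast
  qed
  then show "is_core h la" unfolding is_core_def using la(1) by blast
qed

section \<open>Rim hooks\<close>

lemma skew_diagram_eq:
  "young_diagram la - young_diagram mu = {(r, j). part mu r \<le> j \<and> j < part la r}"
  unfolding young_diagram_eq_part by auto

lemma young_diagram_subset_iff:
  "young_diagram mu \<subseteq> young_diagram la \<longleftrightarrow> (\<forall>r. part mu r \<le> part la r)"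
proof
  assume sub: "young_diagram mu \<subseteq> young_diagram la"
  show "\<forall>r. part mu r \<le> part la r"
  proof (rule allI, rule ccontr)
    fix r assume "\<not> part mu r \<le> part la r"
    then have "(r, part la r) \<in> young_diagram mu" unfolding young_diagram_eq_part by simp
    then show False using sub unfolding young_diagram_eq_part by auto
  qed
qed (auto simp: young_diagram_eq_part intro: less_le_trans)

lemma length_le_if_part_le:
  assumes "is_partition la" "is_partition mu" "\<And>r. part mu r \<le> part la r"
  shows "length mu \<le> length la"
  using assms(3)[of "length la"] part_pos_iff[OF assms(1), of "length la"]
    part_pos_iff[OF assms(2), of "length la"] by (simp add: not_le)

lemma no_2x2_square_skew_iff:
  assumes la: "is_partition la" and mu: "is_partition mu"
  shows "no_2x2_square (young_diagram la - young_diagram mu) \<longleftrightarrow>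
    (\<forall>r. part la (Suc r) \<le> Suc (part mu r))"
proof
  assume sq: "no_2x2_square (young_diagram la - young_diagram mu)"
  show "\<forall>r. part la (Suc r) \<le> Suc (part mu r)"
  proof (rule allI, rule ccontr)
    fix r assume wide: "\<not> part la (Suc r) \<le> Suc (part mu r)"
    define j where "j = part la (Suc r) - 2"
    have "part mu (Suc r) \<le> part mu r" "part la (Suc r) \<le> part la r"
      using part_antimono la mu by auto
    then have "{(r, j), (Suc r, j), (r, Suc j), (Suc r, Suc j)} \<subseteq> young_diagram la - young_diagram mu"
      unfolding skew_diagram_eq j_def using wide by auto
    then show False using sq unfolding no_2x2_square_def by blast
  qed
next
  assume narrow: "\<forall>r. part la (Suc r) \<le> Suc (part mu r)"
  show "no_2x2_square (young_diagram la - young_diagram mu)"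
    unfolding no_2x2_square_def skew_diagram_eq
  proof clarsimp
    fix r j assume "part mu r \<le> j" "Suc j < part la (Suc r)"
    then show False using narrow[rule_format, of r] by simp
  qed
qed

text \<open>A path of adjacent cells can only pass from row \<open>r\<close> to row \<open>Suc r\<close> inside a column
  where these two rows of the skew shape overlap.\<close>

lemma overlap_if_skew_connected:
  assumes conn: "cells_connected (young_diagram la - young_diagram mu)"
    and "part mu a < part la a" "part mu b < part la b" "a \<le> r" "r < b"
  shows "part mu r < part la (Suc r)"
proof (rule ccontr)
  assume no_overlap: "\<not> part mu r < part la (Suc r)"
  define S where "S = young_diagram la - young_diagram mu"
  let ?Rel = "\<lambda>x y. x \<in> S \<and> y \<in> S \<and> cells_adjacent x y"
  have "?Rel\<^sup>*\<^sup>* (a, part mu a) (b, part mu b)"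
    using conn assms(2,3) unfolding cells_connected_def S_def skew_diagram_eq by auto
  moreover have "fst z \<le> r" if "?Rel\<^sup>*\<^sup>* (a, part mu a) z" for z
    using that
  proof (induction rule: rtranclp_induct)
    case (step y z)
    obtain r1 j1 r2 j2 where yz: "y = (r1, j1)" "z = (r2, j2)" by (cases y, cases z) auto
    show ?case
    proof (rule ccontr)
      assume "\<not> fst z \<le> r"
      then have "r2 = Suc r" "r1 = r" "j1 = j2"
        using step(2,3) yz unfolding cells_adjacent_def by auto
      then show False using step(2) yz no_overlap unfolding S_def skew_diagram_eq by auto
    qed
  qed (use \<open>a \<le> r\<close> in simp)
  ultimately show False using \<open>r < b\<close> by fastforce
qed

lemma skew_connected_if_overlap:
  assumes la: "is_partition la" and mu: "is_partition mu"
    and rows: "\<And>r. part mu r < part la r \<Longrightarrow> r \<le> b"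
    and overlap: "\<And>r. a \<le> r \<Longrightarrow> r < b \<Longrightarrow> part mu r < part la (Suc r)"
    and nonempty: "\<And>r. part mu r < part la r \<Longrightarrow> a \<le> r"
  shows "cells_connected (young_diagram la - young_diagram mu)"
proof -
  define S where "S = young_diagram la - young_diagram mu"
  define Rel where "Rel = (\<lambda>p q. p \<in> S \<and> q \<in> S \<and> cells_adjacent p q)"
  have row: "Rel\<^sup>*\<^sup>* (r, j) (r, part mu r)" if "(r, j) \<in> S" for r j
    using that
  proof (induction "j - part mu r" arbitrary: j)
    case (Suc n)
    then have "(r, j - 1) \<in> S" "part mu r < j" unfolding S_def skew_diagram_eq by auto
    then have "Rel (r, j) (r, j - 1)" "Rel\<^sup>*\<^sup>* (r, j - 1) (r, part mu r)"
      using Suc unfolding Rel_def cells_adjacent_def by auto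
    then show ?case by (rule converse_rtranclp_into_rtranclp)
  qed (simp add: S_def skew_diagram_eq)
  have col: "Rel\<^sup>*\<^sup>* (r, part mu r) (b, part mu b)" if "a \<le> r" "r \<le> b" for r
    using that
  proof (induction "b - r" arbitrary: r)
    case (Suc n)
    then have "r < b" by simp
    have "part mu (Suc r) \<le> part mu r" "part la (Suc r) \<le> part la r"
      using part_antimono la mu by auto
    then have "(r, part mu r) \<in> S" "(Suc r, part mu r) \<in> S"
      using overlap[OF Suc(3) \<open>r < b\<close>] unfolding S_def skew_diagram_eq by auto
    then have "Rel (r, part mu r) (Suc r, part mu r)"
      unfolding Rel_def cells_adjacent_def by simp
    moreover have "Rel\<^sup>*\<^sup>* (Suc r, part mu r) (Suc r, part mu (Suc r))"
      using row[OF \<open>(Suc r, part mu r) \<in> S\<close>] .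
    moreover have "Rel\<^sup>*\<^sup>* (Suc r, part mu (Suc r)) (b, part mu b)"
      using Suc(1)[of "Suc r"] Suc(2,3) \<open>r < b\<close> by simp
    ultimately show ?case by (meson converse_rtranclp_into_rtranclp rtranclp_trans)
  qed simp
  have to_last: "Rel\<^sup>*\<^sup>* p (b, part mu b)" if "p \<in> S" for p
  proof -
    obtain r j where p: "p = (r, j)" by (cases p) auto
    then have "part mu r < part la r" using that unfolding S_def skew_diagram_eq by auto
    then show ?thesis using row[of r j] col[of r] rows nonempty that p by (meson rtranclp_trans)
  qed
  have "symp Rel\<^sup>*\<^sup>*" by (rule symp_rtranclp) (auto simp: symp_def Rel_def cells_adjacent_def)
  then have "Rel\<^sup>*\<^sup>* p q" if "p \<in> S" "q \<in> S" for p q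
    using to_last[OF that(1)] to_last[OF that(2)] by (meson rtranclp_trans sympD)
  then show ?thesis unfolding cells_connected_def S_def Rel_def by blast
qed

text \<open>The skew shape \<open>la/mu\<close> occupies exactly the rows \<open>a, \<dots>, b\<close>, and any two consecutive
  rows of it share exactly one column.\<close>

definition ribbon_rows :: "nat list \<Rightarrow> nat list \<Rightarrow> nat \<Rightarrow> nat \<Rightarrow> bool" where
  "ribbon_rows la mu a b \<longleftrightarrow> a \<le> b \<and> part mu b < part la b \<and>
     (\<forall>r. r < a \<or> b < r \<longrightarrow> part mu r = part la r) \<and>
     (\<forall>r. a \<le> r \<longrightarrow> r < b \<longrightarrow> Suc (part mu r) = part la (Suc r))"

lemma ribbon_rows_part_less_iff:
  assumes "is_partition la" "ribbon_rows la mu a b"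
  shows "part mu r < part la r \<longleftrightarrow> a \<le> r \<and> r \<le> b"
proof -
  have "part mu r < part la r" if "a \<le> r" "r < b"
    using assms that part_antimono[OF assms(1), of r "Suc r"] unfolding ribbon_rows_def by force
  then show ?thesis using assms(2) unfolding ribbon_rows_def
    by (metis le_neq_implies_less less_irrefl not_le)
qed

lemma ribbon_rows_part_le:
  assumes "is_partition la" "ribbon_rows la mu a b"
  shows "part mu r \<le> part la r"
proof (cases "a \<le> r \<and> r \<le> b")
  case True
  then show ?thesis using ribbon_rows_part_less_iff[OF assms] by (simp add: less_imp_le)
next
  case False
  then have "r < a \<or> b < r" by auto
  then have "part mu r = part la r" using assms(2) unfolding ribbon_rows_def by blast
  then show ?thesis by simp
qed

lemma ex_ribbon_rows_if_removes_rim_hook: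
  assumes rh: "removes_rim_hook h la mu"
  shows "\<exists>a b. ribbon_rows la mu a b"
proof -
  have la: "is_partition la" and mu: "is_partition mu"
    using rh unfolding removes_rim_hook_def by auto
  have le: "\<And>r. part mu r \<le> part la r"
    using rh unfolding removes_rim_hook_def young_diagram_subset_iff by blast
  define R where "R = {r. part mu r < part la r}"
  have "R \<subseteq> {..<length la}" using part_pos_iff[OF la] unfolding R_def by fastforce
  then have "finite R" using finite_subset by blast
  moreover have "R \<noteq> {}"
  proof -
    obtain r j where "(r, j) \<in> young_diagram la - young_diagram mu"
      using rh unfolding removes_rim_hook_def by auto
    then have "r \<in> R" unfolding skew_diagram_eq R_def by auto
    then show ?thesis by auto
  qed
  ultimately have ab: "Min R \<in> R" "Max R \<in> R" "Min R \<le> Max R"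
    and bounds: "\<And>r. r \<in> R \<Longrightarrow> Min R \<le> r \<and> r \<le> Max R" by auto
  have "Suc (part mu r) = part la (Suc r)" if "Min R \<le> r" "r < Max R" for r
  proof -
    have "part mu r < part la (Suc r)"
      by (rule overlap_if_skew_connected[of la mu "Min R" "Max R"])
        (use rh that ab(1,2) in \<open>auto simp: removes_rim_hook_def R_def\<close>)
    moreover have "part la (Suc r) \<le> Suc (part mu r)"
      using rh no_2x2_square_skew_iff[OF la mu] unfolding removes_rim_hook_def by blast
    ultimately show ?thesis by simp
  qed
  moreover have "part mu r = part la r" if "r < Min R \<or> Max R < r" for r
    using bounds[of r] le[of r] that unfolding R_def by force
  ultimately have "ribbon_rows la mu (Min R) (Max R)"
    using ab unfolding ribbon_rows_def R_def by blast
  then show ?thesis by blast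
qed

lemma removes_rim_hook_if_ribbon_rows:
  assumes la: "is_partition la" and mu: "is_partition mu" and rr: "ribbon_rows la mu a b"
  shows "removes_rim_hook (card (young_diagram la - young_diagram mu)) la mu"
proof -
  note less_iff = ribbon_rows_part_less_iff[OF la rr]
  have "young_diagram mu \<subseteq> young_diagram la"
    using ribbon_rows_part_le[OF la rr] young_diagram_subset_iff by blast
  moreover have "(b, part mu b) \<in> young_diagram la - young_diagram mu"
    using rr unfolding ribbon_rows_def skew_diagram_eq by simp
  moreover have "cells_connected (young_diagram la - young_diagram mu)"
    by (rule skew_connected_if_overlap[OF la mu, of b a])
      (use less_iff rr in \<open>auto simp: ribbon_rows_def\<close>)
  moreover have "part la (Suc r) \<le> Suc (part mu r)" for r
  proof -
    consider "a \<le> r" "r < b" | "r < a" | "b \<le> r" by linarith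
    then show ?thesis
    proof cases
      case 2
      then show ?thesis using rr part_antimono[OF la, of r "Suc r"] unfolding ribbon_rows_def by simp
    next
      case 3
      then show ?thesis using rr part_antimono[OF mu, of r "Suc r"] unfolding ribbon_rows_def by simp
    qed (use rr in \<open>simp add: ribbon_rows_def\<close>)
  qed
  ultimately show ?thesis
    unfolding removes_rim_hook_def using la mu no_2x2_square_skew_iff[OF la mu] by blast
qed

lemma ex_ribbon_rows_ending_at:
  assumes la: "is_partition la" and ab: "a \<le> b"
    and w_ge: "part la (Suc b) \<le> w" and w_less: "w < part la b"
  shows "\<exists>mu. is_partition mu \<and> ribbon_rows la mu a b \<and> part mu b = w"
proof -
  have anti: "i \<le> j \<Longrightarrow> part la j \<le> part la i" for i j using part_antimono[OF la] .
  define v where "v r = (if a \<le> r \<and> r < b then part la (Suc r) - 1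
    else if r = b then w else part la r)" for r
  have pos: "0 < part la (Suc r)" if "r < b" for r
    using w_less anti[of "Suc r" b] that by simp
  have v_le: "v r \<le> part la r" for r
    unfolding v_def using anti[of r "Suc r"] w_less by auto
  have "v (Suc r) \<le> v r" for r
  proof -
    consider "Suc r < a" | "Suc r = a" | "a \<le> r" "Suc r < b" | "a \<le> r" "Suc r = b"
      | "r = b" | "b < r"
      using ab by linarith
    then show ?thesis
    proof cases
      case 1
      then show ?thesis unfolding v_def using anti[of r "Suc r"] ab by simp
    next
      case 2
      then show ?thesis using v_le[of "Suc r"] anti[of r "Suc r"] ab unfolding v_def[of r] by simp
    next
      case 3
      then show ?thesis unfolding v_def using anti[of "Suc r" "Suc (Suc r)"] by simp
    next
      case 4
      then show ?thesis unfolding v_def using w_less by simp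
    next
      case 5
      then show ?thesis unfolding v_def using w_ge by simp
    next
      case 6
      then show ?thesis unfolding v_def using anti[of r "Suc r"] by simp
    qed
  qed
  then have "v j \<le> v i" if "i \<le> j" for i j
    using that by (metis antimono_iff_le_Suc antimonoD)
  moreover have "b < length la" using w_less part_pos_iff[OF la, of b] by simp
  then have "v r = 0" if "length la \<le> r" for r
    using that part_pos_iff[OF la, of r] unfolding v_def by simp
  ultimately obtain mu where mu: "is_partition mu" "\<And>r. part mu r = v r"
    using ex_partition_part_eq[of v "length la"] by blast
  have "ribbon_rows la mu a b"
    unfolding ribbon_rows_def mu(2) v_def using ab w_less pos by auto
  then show ?thesis using mu unfolding v_def by auto
qed

lemma sum_beta_set: "is_partition la \<Longrightarrow> \<Sum>(beta_set k la) = (\<Sum>r<k. beta_num k la r)"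
  unfolding beta_set_def by (simp add: sum.reindex inj_on_beta_num)

lemma card_skew_add_sum_beta_set:
  assumes la: "is_partition la" "length la \<le> k" and mu: "is_partition mu"
    and le: "\<And>r. part mu r \<le> part la r"
  shows "card (young_diagram la - young_diagram mu) + \<Sum>(beta_set k mu) = \<Sum>(beta_set k la)"
proof -
  have "part la r = 0" if "k \<le> r" for r using that la(2) unfolding part_def by simp
  then have "young_diagram la - young_diagram mu = Sigma {..<k} (\<lambda>r. {part mu r..<part la r})"
    unfolding skew_diagram_eq by (auto simp: not_less) (metis le_less_linear less_nat_zero_code)
  then have "card (young_diagram la - young_diagram mu) = (\<Sum>r<k. part la r - part mu r)"
    by (simp add: card_SigmaI)
  moreover have "(\<Sum>r<k. beta_num k la r) = (\<Sum>r<k. part la r - part mu r) + (\<Sum>r<k. beta_num k mu r)"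
    unfolding sum.distrib[symmetric] using le unfolding beta_num_def
    by (intro sum.cong) (auto simp: add.commute le_add_diff_inverse)
  ultimately show ?thesis using sum_beta_set la(1) mu by simp
qed

lemma beta_set_shift_rows:
  assumes la: "is_partition la" and ab: "a \<le> b" "b < k"
    and mid: "\<And>r. a \<le> r \<Longrightarrow> r < b \<Longrightarrow> beta_num k mu r = beta_num k la (Suc r)"
    and out: "\<And>r. r < k \<Longrightarrow> r < a \<or> b < r \<Longrightarrow> beta_num k mu r = beta_num k la r"
  shows "beta_set k mu = insert (beta_num k mu b) (beta_set k la - {beta_num k la a})"
proof (intro equalityI subsetI)
  have inj: "inj_on (beta_num k la) {..<k}" using inj_on_beta_num[OF la] .
  fix z assume "z \<in> beta_set k mu"
  then obtain r where r: "r < k" "z = beta_num k mu r" unfolding beta_set_def by auto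
  consider "r = b" | "a \<le> r" "r < b" | "r < a \<or> b < r" by linarith
  then show "z \<in> insert (beta_num k mu b) (beta_set k la - {beta_num k la a})"
  proof cases
    case 2
    then have "z = beta_num k la (Suc r)" "Suc r < k" "Suc r \<noteq> a" using mid r ab by auto
    moreover have "beta_num k la (Suc r) \<noteq> beta_num k la a"
      using inj_onD[OF inj, of "Suc r" a] \<open>Suc r < k\<close> \<open>Suc r \<noteq> a\<close> ab by auto
    ultimately show ?thesis unfolding beta_set_def by auto
  next
    case 3
    then have "z = beta_num k la r" "r \<noteq> a" using out r ab by auto
    moreover have "beta_num k la r \<noteq> beta_num k la a"
      using inj_onD[OF inj, of r a] r \<open>r \<noteq> a\<close> ab by auto
    ultimately show ?thesis unfolding beta_set_def using r by auto
  qed (use r in simp)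
next
  fix z assume z: "z \<in> insert (beta_num k mu b) (beta_set k la - {beta_num k la a})"
  show "z \<in> beta_set k mu"
  proof (cases "z = beta_num k mu b")
    case False
    then obtain r where r: "r < k" "z = beta_num k la r" "r \<noteq> a"
      using z unfolding beta_set_def by auto
    consider "r < a \<or> b < r" | "a < r" "r \<le> b" using r(3) by linarith
    then show ?thesis
    proof cases
      case 1 then show ?thesis using out r unfolding beta_set_def by (metis image_eqI lessThan_iff)
    next
      case 2
      then have "z = beta_num k mu (r - 1)" using mid[of "r - 1"] r by simp
      then show ?thesis using 2 ab unfolding beta_set_def by auto
    qed
  qed (use ab in \<open>auto simp: beta_set_def\<close>)
qed

lemma sum_insert_remove_eq:
  fixes X :: "nat set"
  assumes "finite X" "x \<in> X" "y \<notin> X - {x}"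
  shows "\<Sum>(insert y (X - {x})) + x = \<Sum>X + y"
proof (cases "y = x")
  case False
  then have "y \<notin> X" using assms(3) by auto
  then show ?thesis using assms(1,2) by (simp add: sum.remove add.commute)
next
  case True
  then have "insert y (X - {x}) = X" using assms(2) by blast
  then show ?thesis using True by (simp add: add.commute)
qed

text \<open>The beads of rows \<open>a + 1, \<dots>, b\<close> of \<open>la\<close> stay in place as the beads of rows
  \<open>a, \<dots>, b - 1\<close> of \<open>mu\<close>; only the bead of row \<open>a\<close> moves, becoming the bead of row \<open>b\<close>.\<close>

lemma beta_set_remove_ribbon:
  assumes la: "is_partition la" "length la \<le> k" and mu: "is_partition mu"
    and rr: "ribbon_rows la mu a b"
  defines "x \<equiv> beta_num k la a" and "h \<equiv> card (young_diagram la - young_diagram mu)"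
  shows "a < k" and "0 < h" and "h \<le> x" and "x - h \<notin> beta_set k la"
    and "beta_num k mu b = x - h" and "beta_set k mu = insert (x - h) (beta_set k la - {x})"
proof -
  have "b < k" using rr part_pos_iff[OF la(1), of b] la(2) unfolding ribbon_rows_def by simp
  moreover have ab: "a \<le> b" using rr unfolding ribbon_rows_def by simp
  ultimately show "a < k" by simp
  have shift: "beta_set k mu = insert (beta_num k mu b) (beta_set k la - {x})"
    unfolding x_def
  proof (rule beta_set_shift_rows[OF la(1) ab \<open>b < k\<close>])
    fix r assume "a \<le> r" "r < b"
    then have "Suc (part mu r) = part la (Suc r)" using rr unfolding ribbon_rows_def by simp
    then show "beta_num k mu r = beta_num k la (Suc r)"
      using \<open>r < b\<close> \<open>b < k\<close> unfolding beta_num_def by simp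
  next
    fix r assume "r < a \<or> b < r"
    then have "part mu r = part la r" using rr unfolding ribbon_rows_def by blast
    then show "beta_num k mu r = beta_num k la r" unfolding beta_num_def by simp
  qed
  have x_in: "x \<in> beta_set k la" unfolding x_def beta_set_def using \<open>a < k\<close> by simp
  have y_new: "beta_num k mu b \<notin> beta_set k la - {x}"
  proof
    assume "beta_num k mu b \<in> beta_set k la - {x}"
    then have "beta_set k mu = beta_set k la - {x}" using shift by (simp add: insert_absorb)
    then have "card (beta_set k mu) = k - 1" using x_in card_beta_set[OF la(1)] by simp
    then show False using card_beta_set[OF mu] \<open>b < k\<close> by simp
  qed
  have "h + \<Sum>(beta_set k mu) = \<Sum>(beta_set k la)"
    unfolding h_def by (rule card_skew_add_sum_beta_set[OF la mu ribbon_rows_part_le[OF la(1) rr]])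
  moreover have "\<Sum>(beta_set k mu) + x = \<Sum>(beta_set k la) + beta_num k mu b"
    using sum_insert_remove_eq[OF finite_beta_set x_in y_new] shift by simp
  ultimately have hx: "h + beta_num k mu b = x" by linarith
  have "(b, part mu b) \<in> young_diagram la - young_diagram mu"
    using rr unfolding ribbon_rows_def skew_diagram_eq by simp
  moreover have "finite (young_diagram la - young_diagram mu)"
    using finite_young_diagram by blast
  ultimately show "0 < h" unfolding h_def using card_gt_0_iff by blast
  show "h \<le> x" and y: "beta_num k mu b = x - h" using hx by auto
  show "x - h \<notin> beta_set k la" using y_new y hx \<open>0 < h\<close> by auto
  show "beta_set k mu = insert (x - h) (beta_set k la - {x})" using shift y by simp
qed

definition bead_move :: "nat \<Rightarrow> nat set \<Rightarrow> nat set \<Rightarrow> bool" where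
  "bead_move h X Y \<longleftrightarrow> (\<exists>x\<in>X. h \<le> x \<and> x - h \<notin> X \<and> Y = insert (x - h) (X - {x}))"

lemma length_le_if_removes_rim_hook:
  "removes_rim_hook h la mu \<Longrightarrow> length mu \<le> length la"
  unfolding removes_rim_hook_def young_diagram_subset_iff by (blast intro: length_le_if_part_le)

lemma bead_move_if_removes_rim_hook:
  assumes "removes_rim_hook h la mu" "length la \<le> k"
  shows "bead_move h (beta_set k la) (beta_set k mu)"
proof -
  have la: "is_partition la" and mu: "is_partition mu"
    using assms(1) unfolding removes_rim_hook_def by auto
  obtain a b where rr: "ribbon_rows la mu a b"
    using ex_ribbon_rows_if_removes_rim_hook[OF assms(1)] by blast
  have h: "card (young_diagram la - young_diagram mu) = h"
    using assms(1) unfolding removes_rim_hook_def by blast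
  note move = beta_set_remove_ribbon[OF la assms(2) mu rr, unfolded h]
  have "beta_num k la a \<in> beta_set k la" using move(1) unfolding beta_set_def by simp
  then show ?thesis using move(3,4,6) unfolding bead_move_def by blast
qed

lemma ex_removes_rim_hook_if_gap:
  assumes la: "is_partition la" "length la \<le> k" and "a < k" "0 < h"
    and hx: "h \<le> beta_num k la a" and gap: "beta_num k la a - h \<notin> beta_set k la"
  shows "\<exists>mu. removes_rim_hook h la mu"
proof -
  define y where "y = beta_num k la a - h"
  define c where "c = card {r. r < k \<and> y < beta_num k la r}"
  note above = beads_above_gap[OF la gap[folded y_def], folded c_def]
  have "a < c" using above(1)[of a] \<open>a < k\<close> hx \<open>0 < h\<close> unfolding y_def by simp
  define b where "b = c - 1"
  have ab: "a \<le> b" and bc: "Suc b = c"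
    using \<open>a < c\<close> unfolding b_def by auto
  define w where "w = y - (k - c)"
  have "part la (Suc b) \<le> w" "w < part la b"
    using above(4,5) \<open>a < c\<close> bc unfolding w_def b_def by simp_all
  then obtain mu where mu: "is_partition mu" "ribbon_rows la mu a b" "part mu b = w"
    using ex_ribbon_rows_ending_at[OF la(1) ab] by blast
  have "beta_num k mu b = y"
    unfolding beta_num_def mu(3) w_def using above(3) bc by simp
  then have "card (young_diagram la - young_diagram mu) = h"
    using beta_set_remove_ribbon(3,5)[OF la mu(1,2)] hx unfolding y_def by simp
  then show ?thesis using removes_rim_hook_if_ribbon_rows[OF la(1) mu(1,2)] by auto
qed

lemma ex_removes_rim_hook_iff:
  assumes la: "is_partition la" "length la \<le> k" and h0: "0 < h"
  shows "(\<exists>mu. removes_rim_hook h la mu) \<longleftrightarrow> \<not> minus_closed h (beta_set k la)"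
proof
  assume "\<exists>mu. removes_rim_hook h la mu"
  then show "\<not> minus_closed h (beta_set k la)"
    using bead_move_if_removes_rim_hook[OF _ la(2)]
    unfolding bead_move_def minus_closed_def by blast
next
  assume "\<not> minus_closed h (beta_set k la)"
  then obtain a where "a < k" and hx: "h \<le> beta_num k la a"
    and "beta_num k la a - h \<notin> beta_set k la"
    unfolding minus_closed_def beta_set_def by auto
  then show "\<exists>mu. removes_rim_hook h la mu"
    using ex_removes_rim_hook_if_gap[OF la _ h0] by blast
qed

section \<open>Runners and the core\<close>

definition runner_count :: "nat \<Rightarrow> nat set \<Rightarrow> nat \<Rightarrow> nat" where
  "runner_count m X r = card {x \<in> X. x mod m = r}"

text \<open>The \<open>m\<close>-closed set with \<open>f r\<close> beads on runner \<open>r\<close>, for each \<open>r < m\<close>.\<close>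

definition abacus_set :: "nat \<Rightarrow> (nat \<Rightarrow> nat) \<Rightarrow> nat set" where
  "abacus_set m f = {x. x div m < f (x mod m)}"

lemma runner_count_bead_move:
  assumes "finite X" "bead_move h X Y"
  shows "runner_count h Y r = runner_count h X r"
proof -
  obtain x where x: "x \<in> X" "h \<le> x" "x - h \<notin> X" and Y: "Y = insert (x - h) (X - {x})"
    using assms(2) unfolding bead_move_def by blast
  have same_runner: "(x - h) mod h = x mod h" using x(2) by (simp add: le_mod_geq)
  show ?thesis
  proof (cases "x mod h = r")
    case True
    then have "{z \<in> Y. z mod h = r} = insert (x - h) ({z \<in> X. z mod h = r} - {x})"
      using same_runner Y by auto
    moreover have "x \<in> {z \<in> X. z mod h = r}" using True x(1) by simp
    moreover have "0 < card {z \<in> X. z mod h = r}"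
      using True assms(1) x(1) card_gt_0_iff by fastforce
    ultimately show ?thesis unfolding runner_count_def using assms(1) x(3)
      by (simp add: card.insert_remove)
  next
    case False
    then have "{z \<in> Y. z mod h = r} = {z \<in> X. z mod h = r}"
      using same_runner Y by auto
    then show ?thesis unfolding runner_count_def by simp
  qed
qed

lemma minus_closed_residue_class_eq:
  assumes "finite X" "minus_closed m X" "0 < m"
  shows "{j. r + m * j \<in> X} = {..<card {j. r + m * j \<in> X}}"
proof (rule down_closed_eq_lessThan)
  have "inj (\<lambda>j. r + m * j)" using assms(3) by (auto intro: injI)
  then show "finite {j. r + m * j \<in> X}"
    using finite_vimageI[OF assms(1)] by (simp add: vimage_def)
next
  have down: "r + m * i \<in> X" if "r + m * (i + d) \<in> X" for i d
    using that
  proof (induction d)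
    case (Suc d)
    have "m \<le> r + m * (i + Suc d)" by simp
    then have "r + m * (i + Suc d) - m \<in> X"
      using Suc(2) assms(2) unfolding minus_closed_def by blast
    moreover have "r + m * (i + Suc d) - m = r + m * (i + d)" by simp
    ultimately show ?case using Suc(1) by simp
  qed simp
  fix i j assume "j \<in> {j. r + m * j \<in> X}" "i \<le> j"
  then show "i \<in> {j. r + m * j \<in> X}" using down[of i "j - i"] by simp
qed

lemma card_residue_class_eq_runner_count:
  assumes "r < m"
  shows "card {j. r + m * j \<in> X} = runner_count m X r"
proof -
  have "(\<lambda>j. r + m * j) ` {j. r + m * j \<in> X} = {z \<in> X. z mod m = r}"
  proof (intro equalityI subsetI)
    fix z assume z: "z \<in> {z \<in> X. z mod m = r}"
    then have "z = r + m * (z div m)" using div_mult_mod_eq[of z m] by (simp add: algebra_simps)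
    moreover have "z div m \<in> {j. r + m * j \<in> X}" using z calculation by simp
    ultimately show "z \<in> (\<lambda>j. r + m * j) ` {j. r + m * j \<in> X}" by (rule image_eqI)
  qed (use assms in auto)
  moreover have "inj (\<lambda>j. r + m * j)" using assms by (auto intro: injI)
  ultimately show ?thesis unfolding runner_count_def
    by (metis card_image inj_on_subset subset_UNIV)
qed

lemma abacus_set_runner_count:
  assumes "finite X" "minus_closed m X" "0 < m"
  shows "abacus_set m (runner_count m X) = X"
proof -
  have "x \<in> X \<longleftrightarrow> x div m < runner_count m X (x mod m)" for x
  proof -
    have "x \<in> X \<longleftrightarrow> x div m \<in> {j. x mod m + m * j \<in> X}" by simp
    also have "\<dots> \<longleftrightarrow> x div m < card {j. x mod m + m * j \<in> X}"
      using minus_closed_residue_class_eq[OF assms, of "x mod m"] by blast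
    finally show ?thesis using card_residue_class_eq_runner_count[of "x mod m" m X] assms(3) by simp
  qed
  then show ?thesis unfolding abacus_set_def by auto
qed

lemma abacus_set_cong:
  assumes "0 < m" "\<And>r. r < m \<Longrightarrow> f r = g r"
  shows "abacus_set m f = abacus_set m g"
proof -
  have "f (x mod m) = g (x mod m)" for x using assms by simp
  then show ?thesis unfolding abacus_set_def by simp
qed

lemma minus_closed_eqI:
  assumes "finite X" "finite Y" "minus_closed m X" "minus_closed m Y" "0 < m"
    and "\<And>r. r < m \<Longrightarrow> runner_count m X r = runner_count m Y r"
  shows "X = Y"
proof -
  have "X = abacus_set m (runner_count m X)" using abacus_set_runner_count[OF assms(1,3,5)] ..
  also have "\<dots> = abacus_set m (runner_count m Y)" by (rule abacus_set_cong[OF assms(5,6)])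
  also have "\<dots> = Y" by (rule abacus_set_runner_count[OF assms(2,4,5)])
  finally show ?thesis .
qed

lemma runner_count_rim_hook_path:
  assumes "(removes_rim_hook s)\<^sup>*\<^sup>* la mu" "is_partition la" "length la \<le> k"
  shows "is_partition mu \<and> length mu \<le> k \<and>
    (\<forall>r. runner_count s (beta_set k mu) r = runner_count s (beta_set k la) r)"
  using assms(1)
proof (induction rule: rtranclp_induct)
  case (step nu mu)
  then have nu: "length nu \<le> k" by simp
  have "is_partition mu" using step(2) unfolding removes_rim_hook_def by simp
  moreover have "length mu \<le> k" using length_le_if_removes_rim_hook[OF step(2)] nu by simp
  moreover have "runner_count s (beta_set k mu) r = runner_count s (beta_set k nu) r" for r
    using runner_count_bead_move[OF finite_beta_set bead_move_if_removes_rim_hook[OF step(2) nu]] .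
  ultimately show ?case using step(3) by simp
qed (use assms in simp)

lemma ex_terminal_rim_hook_path:
  "\<exists>mu. (removes_rim_hook h)\<^sup>*\<^sup>* la mu \<and> \<not> (\<exists>nu. removes_rim_hook h mu nu)"
proof (induction "card (young_diagram la)" arbitrary: la rule: less_induct)
  case less
  show ?case
  proof (cases "\<exists>nu. removes_rim_hook h la nu")
    case True
    then obtain nu where nu: "removes_rim_hook h la nu" by blast
    then have "young_diagram nu \<subset> young_diagram la" unfolding removes_rim_hook_def by blast
    then have "card (young_diagram nu) < card (young_diagram la)"
      by (rule psubset_card_mono[OF finite_young_diagram])
    then obtain mu where "(removes_rim_hook h)\<^sup>*\<^sup>* nu mu" "\<not> (\<exists>nu. removes_rim_hook h mu nu)"
      using less by blast
    then show ?thesis using nu by (meson converse_rtranclp_into_rtranclp)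
  next
    case False
    then show ?thesis by (intro exI[of _ la]) simp
  qed
qed

lemma minus_closed_if_terminal:
  assumes "is_partition mu" "length mu \<le> k" "0 < s" "\<not> (\<exists>nu. removes_rim_hook s mu nu)"
  shows "minus_closed s (beta_set k mu)"
  using ex_removes_rim_hook_iff[OF assms(1-3)] assms(4) by blast

text \<open>Terminal partitions reachable from \<open>la\<close> are \<open>s\<close>-closed with the runner counts of \<open>la\<close>,
  hence unique; this makes the \<open>THE\<close> in \<^const>\<open>core\<close> well defined.\<close>

lemma core_terminal_rim_hook_path:
  assumes "is_partition la" "0 < s"
  shows "(removes_rim_hook s)\<^sup>*\<^sup>* la (core s la) \<and> \<not> (\<exists>nu. removes_rim_hook s (core s la) nu)"
  unfolding core_def
proof (rule theI')
  let ?k = "length la"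
  show "\<exists>!mu. (removes_rim_hook s)\<^sup>*\<^sup>* la mu \<and> \<not> (\<exists>nu. removes_rim_hook s mu nu)"
  proof (rule ex_ex1I)
    fix m1 m2
    assume m1: "(removes_rim_hook s)\<^sup>*\<^sup>* la m1 \<and> \<not> (\<exists>nu. removes_rim_hook s m1 nu)"
      and m2: "(removes_rim_hook s)\<^sup>*\<^sup>* la m2 \<and> \<not> (\<exists>nu. removes_rim_hook s m2 nu)"
    note R1 = runner_count_rim_hook_path[OF conjunct1[OF m1] assms(1) order_refl]
      and R2 = runner_count_rim_hook_path[OF conjunct1[OF m2] assms(1) order_refl]
    have "minus_closed s (beta_set ?k m1)" "minus_closed s (beta_set ?k m2)"
      using minus_closed_if_terminal R1 R2 m1 m2 assms(2) by blast+
    then have "beta_set ?k m1 = beta_set ?k m2"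
      by (rule minus_closed_eqI[OF finite_beta_set finite_beta_set _ _ assms(2)]) (simp add: R1 R2)
    then show "m1 = m2" using beta_set_inj R1 R2 by blast
  qed (rule ex_terminal_rim_hook_path)
qed

lemma core_eq_iff_runner_count:
  assumes la: "is_partition la" "length la \<le> k" and sigma: "is_core s sigma" "length sigma \<le> k"
    and "0 < s"
  shows "core s la = sigma \<longleftrightarrow>
    (\<forall>r<s. runner_count s (beta_set k la) r = runner_count s (beta_set k sigma) r)"
proof -
  note spec = core_terminal_rim_hook_path[OF la(1) \<open>0 < s\<close>]
  note R = runner_count_rim_hook_path[OF conjunct1[OF spec] la]
  have "is_partition sigma" using sigma(1) unfolding is_core_def by simp
  then have closed_sigma: "minus_closed s (beta_set k sigma)"
    using is_core_iff_minus_closed[OF _ sigma(2) \<open>0 < s\<close>] sigma(1) by simp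
  have "minus_closed s (beta_set k (core s la))"
    using minus_closed_if_terminal R spec \<open>0 < s\<close> by blast
  show ?thesis
  proof
    assume "\<forall>r<s. runner_count s (beta_set k la) r = runner_count s (beta_set k sigma) r"
    then have "beta_set k (core s la) = beta_set k sigma"
      using minus_closed_eqI[OF finite_beta_set finite_beta_set
          \<open>minus_closed s (beta_set k (core s la))\<close> closed_sigma \<open>0 < s\<close>] R by simp
    then show "core s la = sigma" using beta_set_inj R \<open>is_partition sigma\<close> sigma(2) by blast
  next
    assume "core s la = sigma"
    then show "\<forall>r<s. runner_count s (beta_set k la) r = runner_count s (beta_set k sigma) r"
      using R by simp
  qed
qed

section \<open>Counting cores with a given core\<close>

lemma card_eq_sum_runner_count:
  assumes "finite X" "0 < m"
  shows "card X = (\<Sum>r<m. runner_count m X r)"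
proof -
  have "X = (\<Union>r\<in>{..<m}. {x \<in> X. x mod m = r})" using assms(2) by auto
  then have "card X = card (\<Union>r\<in>{..<m}. {x \<in> X. x mod m = r})" by simp
  also have "\<dots> = (\<Sum>r<m. card {x \<in> X. x mod m = r})"
    by (rule card_UN_disjoint) (use assms(1) in auto)
  finally show ?thesis unfolding runner_count_def .
qed

lemma runner_count_eq_sum_finer:
  assumes "finite X" "0 < s" "0 < t" "\<rho> < s"
  shows "runner_count s X \<rho> = (\<Sum>q<t. runner_count (s * t) X (\<rho> + s * q))"
proof -
  have "{x \<in> X. x mod s = \<rho>} = (\<Union>q\<in>{..<t}. {x \<in> X. x mod (s * t) = \<rho> + s * q})"
  proof (intro equalityI subsetI)
    fix x assume x: "x \<in> {x \<in> X. x mod s = \<rho>}"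
    define q where "q = x mod (s * t) div s"
    have "x mod (s * t) mod s = x mod s" by (simp add: mod_mod_cancel)
    then have "x mod (s * t) = \<rho> + s * q"
      using x div_mult_mod_eq[of "x mod (s * t)" s] unfolding q_def by (simp add: algebra_simps)
    moreover have "q < t" unfolding q_def
      by (rule less_mult_imp_div_less) (use assms in \<open>simp add: mult.commute\<close>)
    ultimately show "x \<in> (\<Union>q\<in>{..<t}. {x \<in> X. x mod (s * t) = \<rho> + s * q})" using x by auto
  next
    fix x assume "x \<in> (\<Union>q\<in>{..<t}. {x \<in> X. x mod (s * t) = \<rho> + s * q})"
    then obtain q where "x \<in> X" "x mod (s * t) = \<rho> + s * q" by auto
    then have "x mod (s * t) mod s = \<rho>" using assms(4) by simp
    then show "x \<in> {x \<in> X. x mod s = \<rho>}" using \<open>x \<in> X\<close> by (simp add: mod_mod_cancel)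
  qed
  then have "runner_count s X \<rho> = card (\<Union>q\<in>{..<t}. {x \<in> X. x mod (s * t) = \<rho> + s * q})"
    unfolding runner_count_def by simp
  also have "\<dots> = (\<Sum>q<t. card {x \<in> X. x mod (s * t) = \<rho> + s * q})"
    by (rule card_UN_disjoint) (use assms(1,2) in auto)
  finally show ?thesis unfolding runner_count_def .
qed

lemma abacus_set_eq_UN:
  assumes "0 < m"
  shows "abacus_set m f = (\<Union>r\<in>{..<m}. (\<lambda>j. r + m * j) ` {..<f r})"
proof (intro equalityI subsetI)
  fix x assume "x \<in> abacus_set m f"
  then have "x = x mod m + m * (x div m)" "x div m < f (x mod m)" "x mod m < m"
    using assms div_mult_mod_eq[of x m] unfolding abacus_set_def by (auto simp: algebra_simps)
  then show "x \<in> (\<Union>r\<in>{..<m}. (\<lambda>j. r + m * j) ` {..<f r})" by blast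
qed (use assms in \<open>auto simp: abacus_set_def\<close>)

lemma finite_abacus_set: "0 < m \<Longrightarrow> finite (abacus_set m f)"
  using abacus_set_eq_UN by simp

lemma minus_closed_abacus_set: "minus_closed m (abacus_set m f)"
  unfolding minus_closed_def abacus_set_def
proof clarify
  fix x assume x: "x div m < f (x mod m)" "m \<le> x"
  show "(x - m) div m < f ((x - m) mod m)"
  proof (cases "m = 0")
    case False
    have "x = (x - m) + m" using x(2) by simp
    then have "(x - m) mod m = x mod m" "x div m = Suc ((x - m) div m)"
      using False by (metis mod_add_self2, metis div_add_self2 Suc_eq_plus1)
    then show ?thesis using x(1) by simp
  qed (use x in simp)
qed

lemma runner_count_abacus_set:
  assumes "r < m"
  shows "runner_count m (abacus_set m f) r = f r"
proof -
  have "{x \<in> abacus_set m f. x mod m = r} = (\<lambda>j. r + m * j) ` {..<f r}"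
  proof (intro equalityI subsetI)
    fix x assume x: "x \<in> {x \<in> abacus_set m f. x mod m = r}"
    then have "x = r + m * (x div m)" using div_mult_mod_eq[of x m] by (simp add: algebra_simps)
    moreover have "x div m < f r" using x unfolding abacus_set_def by auto
    ultimately show "x \<in> (\<lambda>j. r + m * j) ` {..<f r}" by blast
  qed (use assms in \<open>auto simp: abacus_set_def\<close>)
  moreover have "inj (\<lambda>j. r + m * j)" using assms by (auto intro: injI)
  ultimately show ?thesis unfolding runner_count_def by (simp add: card_image inj_on_subset)
qed

lemma add_mult_less_mult:
  fixes \<rho> q s t :: nat
  assumes "\<rho> < s" "q < t"
  shows "\<rho> + s * q < s * t"
proof -
  have "\<rho> + s * q < s * Suc q" using assms(1) by simp
  also have "\<dots> \<le> s * t" using assms(2) by (intro mult_le_mono2) simp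
  finally show ?thesis .
qed

lemma runner_count_coarse_abacus_set:
  assumes "0 < s" "0 < t" "\<rho> < s"
  shows "runner_count s (abacus_set (s * t) f) \<rho> = (\<Sum>q<t. f (\<rho> + s * q))"
  using runner_count_eq_sum_finer[OF finite_abacus_set assms(1,2,3)] assms
    runner_count_abacus_set add_mult_less_mult by simp

lemma sum_list_map_upt: "sum_list (map f [0..<n]) = (\<Sum>q<n. f q)"
  by (metis sum_set_upt_conv_sum_list_nat atLeast0LessThan set_upt)

lemma bij_betw_split_runners:
  assumes "0 < s"
  shows "bij_betw (\<lambda>f. \<lambda>\<rho>\<in>{..<s}. map (\<lambda>q. f (\<rho> + s * q)) [0..<t])
    {f \<in> {..<s * t} \<rightarrow>\<^sub>E UNIV. \<forall>\<rho><s. (\<Sum>q<t. f (\<rho> + s * q)) = d \<rho>}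
    (\<Pi>\<^sub>E \<rho>\<in>{..<s}. {l. length l = t \<and> sum_list l = d \<rho>})"
    (is "bij_betw ?split ?F ?L")
proof (rule bij_betw_byWitness[where f' = "\<lambda>G. \<lambda>r\<in>{..<s * t}. G (r mod s) ! (r div s)"])
  let ?join = "\<lambda>G. \<lambda>r\<in>{..<s * t}. G (r mod s) ! (r div s)"
  show "\<forall>f\<in>?F. ?join (?split f) = f"
  proof (intro ballI ext)
    fix f r assume f: "f \<in> ?F"
    show "?join (?split f) r = f r"
    proof (cases "r < s * t")
      case True
      then have "r div s < t" using less_mult_imp_div_less[of r t s] by (simp add: mult.commute)
      moreover have "r mod s < s" using assms by simp
      ultimately have "?join (?split f) r = f (r mod s + s * (r div s))" using True by simp
      then show ?thesis by (simp only: mod_mult_div_eq)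
    next
      case False
      then show ?thesis using f PiE_arb[of f "{..<s * t}" "\<lambda>_. UNIV" r] by simp
    qed
  qed
  show "\<forall>G\<in>?L. ?split (?join G) = G"
  proof (intro ballI ext)
    fix G \<rho> assume G: "G \<in> ?L"
    show "?split (?join G) \<rho> = G \<rho>"
    proof (cases "\<rho> < s")
      case True
      have "?split (?join G) \<rho> = map (\<lambda>q. ?join G (\<rho> + s * q)) [0..<t]"
        using True by (simp only: restrict_apply' lessThan_iff)
      also have "\<dots> = map (\<lambda>q. G \<rho> ! q) [0..<t]"
        by (rule map_cong[OF refl]) (use True add_mult_less_mult[OF True] in simp)
      also have "\<dots> = G \<rho>"
        using G True map_nth[of "G \<rho>"] by (simp add: PiE_iff)
      finally show ?thesis .
    next
      case False
      then show ?thesis using G PiE_arb[of G "{..<s}" _ \<rho>] by simp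
    qed
  qed
  show "?split ` ?F \<subseteq> ?L"
  proof (rule image_subsetI)
    fix f assume "f \<in> ?F"
    then show "?split f \<in> ?L" by (simp add: sum_list_map_upt)
  qed
  show "?join ` ?L \<subseteq> ?F"
  proof (rule image_subsetI)
    fix G assume G: "G \<in> ?L"
    have "(\<Sum>q<t. ?join G (\<rho> + s * q)) = d \<rho>" if "\<rho> < s" for \<rho>
    proof -
      have "(\<Sum>q<t. ?join G (\<rho> + s * q)) = (\<Sum>q<t. G \<rho> ! q)"
        using that add_mult_less_mult[OF that] by simp
      also have "\<dots> = sum_list (map (\<lambda>q. G \<rho> ! q) [0..<t])" by (simp add: sum_list_map_upt)
      also have "\<dots> = d \<rho>" using G that map_nth[of "G \<rho>"] by (auto simp: PiE_iff)
      finally show ?thesis .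
    qed
    then show "?join G \<in> ?F" by simp
  qed
qed

lemma inj_on_abacus_set: "inj_on (abacus_set m) ({..<m} \<rightarrow>\<^sub>E UNIV)"
proof (rule inj_onI)
  fix f g assume f: "f \<in> {..<m} \<rightarrow>\<^sub>E UNIV" and g: "g \<in> {..<m} \<rightarrow>\<^sub>E UNIV"
    and eq: "abacus_set m f = abacus_set m g"
  have "f r = g r" if "r < m" for r
    using runner_count_abacus_set[OF that, of f] runner_count_abacus_set[OF that, of g] eq by simp
  then show "f = g" using f g by (auto intro: PiE_ext)
qed

lemma minus_closed_with_runner_counts_eq_image:
  assumes "0 < s" "0 < t" "(\<Sum>\<rho><s. d \<rho>) = k"
  shows "{X. finite X \<and> card X = k \<and> minus_closed (s * t) X \<and>
      (\<forall>\<rho><s. runner_count s X \<rho> = d \<rho>)} =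
    abacus_set (s * t) ` {f \<in> {..<s * t} \<rightarrow>\<^sub>E UNIV. \<forall>\<rho><s. (\<Sum>q<t. f (\<rho> + s * q)) = d \<rho>}"
    (is "?B = abacus_set (s * t) ` ?F")
proof (intro equalityI subsetI)
  have st: "0 < s * t" using assms by simp
  fix X assume X: "X \<in> ?B"
  define f where "f = restrict (runner_count (s * t) X) {..<s * t}"
  have "X = abacus_set (s * t) (runner_count (s * t) X)"
    using abacus_set_runner_count[OF _ _ st] X by simp
  also have "\<dots> = abacus_set (s * t) f"
    by (rule abacus_set_cong[OF st]) (simp add: f_def)
  finally have "X = abacus_set (s * t) f" .
  moreover have "f \<in> ?F"
    unfolding f_def using X runner_count_eq_sum_finer[OF _ assms(1,2)] add_mult_less_mult by auto
  ultimately show "X \<in> abacus_set (s * t) ` ?F" by blast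
next
  have st: "0 < s * t" using assms by simp
  fix X assume "X \<in> abacus_set (s * t) ` ?F"
  then obtain f where f: "f \<in> ?F" and X: "X = abacus_set (s * t) f" by blast
  then have counts: "\<forall>\<rho><s. runner_count s X \<rho> = d \<rho>"
    using runner_count_coarse_abacus_set[OF assms(1,2)] by simp
  have "card X = k"
    using card_eq_sum_runner_count[OF finite_abacus_set[OF st] assms(1)] counts assms(3) X by simp
  then show "X \<in> ?B" using counts X finite_abacus_set[OF st] minus_closed_abacus_set by simp
qed

lemma card_minus_closed_with_runner_counts:
  assumes "0 < s" "0 < t" "(\<Sum>\<rho><s. d \<rho>) = k"
  shows "card {X. finite X \<and> card X = k \<and> minus_closed (s * t) X \<and>
      (\<forall>\<rho><s. runner_count s X \<rho> = d \<rho>)} = (\<Prod>\<rho><s. (d \<rho> + t - 1) choose d \<rho>)"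
proof -
  let ?F = "{f \<in> {..<s * t} \<rightarrow>\<^sub>E UNIV. \<forall>\<rho><s. (\<Sum>q<t. f (\<rho> + s * q)) = d \<rho>}"
  have "inj_on (abacus_set (s * t)) ?F"
    using inj_on_abacus_set by (rule inj_on_subset) blast
  then have "card (abacus_set (s * t) ` ?F) = card ?F" by (rule card_image)
  also have "\<dots> = card (\<Pi>\<^sub>E \<rho>\<in>{..<s}. {l. length l = t \<and> sum_list l = d \<rho>})"
    by (rule bij_betw_same_card[OF bij_betw_split_runners[OF assms(1)]])
  also have "\<dots> = (\<Prod>\<rho><s. (d \<rho> + t - 1) choose d \<rho>)"
    by (simp add: card_PiE card_length_sum_list)
  finally show ?thesis using minus_closed_with_runner_counts_eq_image[OF assms] by simp
qed

lemma bij_betw_beta_set_cores: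
  assumes "0 < s" "0 < t" and sigma: "is_core s sigma" "length sigma \<le> k"
  shows "bij_betw (beta_set k) {la. is_core (s * t) la \<and> core s la = sigma \<and> length la \<le> k}
    {X. finite X \<and> card X = k \<and> minus_closed (s * t) X \<and>
      (\<forall>\<rho><s. runner_count s X \<rho> = runner_count s (beta_set k sigma) \<rho>)}"
    (is "bij_betw _ ?A ?B")
  unfolding bij_betw_def
proof
  have mem: "la \<in> ?A \<longleftrightarrow> beta_set k la \<in> ?B" if "is_partition la" "length la \<le> k" for la
    using that card_beta_set[OF that(1)] is_core_iff_minus_closed[OF that] assms(1,2)
      core_eq_iff_runner_count[OF that sigma assms(1)] by auto
  show "inj_on (beta_set k) ?A"
    unfolding inj_on_def is_core_def using beta_set_inj by blast
  show "beta_set k ` ?A = ?B"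
  proof (intro equalityI subsetI)
    fix X assume "X \<in> beta_set k ` ?A"
    then obtain la where la: "la \<in> ?A" "X = beta_set k la" by blast
    then have "is_partition la" "length la \<le> k" unfolding is_core_def by auto
    then show "X \<in> ?B" using mem la by blast
  next
    fix X assume "X \<in> ?B"
    then obtain la where la: "is_partition la" "length la \<le> k" "beta_set k la = X"
      using ex_partition_beta_set_eq by blast
    then show "X \<in> beta_set k ` ?A" using mem[OF la(1,2)] \<open>X \<in> ?B\<close> by blast
  qed
qed

lemma card_cores_with_core:
  assumes "0 < s" "0 < t" and sigma: "is_core s sigma" "length sigma \<le> k"
  shows "card {la. is_core (s * t) la \<and> core s la = sigma \<and> length la \<le> k} =
    (\<Prod>\<rho><s. (runner_count s (beta_set k sigma) \<rho> + t - 1) choose runner_count s (beta_set k sigma) \<rho>)"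
proof -
  have "is_partition sigma" using sigma unfolding is_core_def by simp
  then have "(\<Sum>\<rho><s. runner_count s (beta_set k sigma) \<rho>) = k"
    using card_eq_sum_runner_count[OF finite_beta_set assms(1), of k sigma] card_beta_set by simp
  then show ?thesis
    using bij_betw_same_card[OF bij_betw_beta_set_cores[OF assms]]
      card_minus_closed_with_runner_counts[OF assms(1,2)] by simp
qed

section \<open>Quasipolynomiality\<close>

lemma beta_set_add:
  assumes "length sigma \<le> k"
  shows "beta_set (k + m) sigma = (\<lambda>x. x + m) ` beta_set k sigma \<union> {..<m}"
proof (intro equalityI subsetI)
  fix z assume "z \<in> beta_set (k + m) sigma"
  then obtain i where i: "i < k + m" "z = beta_num (k + m) sigma i" unfolding beta_set_def by auto
  show "z \<in> (\<lambda>x. x + m) ` beta_set k sigma \<union> {..<m}"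
  proof (cases "i < k")
    case True
    then have "z = beta_num k sigma i + m" using i unfolding beta_num_def by simp
    then show ?thesis using True unfolding beta_set_def by auto
  next
    case False
    then have "part sigma i = 0" using assms unfolding part_def by simp
    then have "z = k + m - Suc i" using i unfolding beta_num_def by simp
    then have "z < m" using i False by linarith
    then show ?thesis by simp
  qed
next
  fix z assume z: "z \<in> (\<lambda>x. x + m) ` beta_set k sigma \<union> {..<m}"
  show "z \<in> beta_set (k + m) sigma"
  proof (cases "z < m")
    case True
    define i where "i = k + m - Suc z"
    have "k \<le> i" "i < k + m" using True unfolding i_def by auto
    moreover from this have "part sigma i = 0" using assms unfolding part_def by simp
    ultimately have "beta_num (k + m) sigma i = z" unfolding beta_num_def i_def using True by simp
    then show ?thesis unfolding beta_set_def using \<open>i < k + m\<close> by (metis image_eqI lessThan_iff)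
  next
    case False
    then obtain i where "i < k" "z = beta_num k sigma i + m" using z unfolding beta_set_def by auto
    then have "z = beta_num (k + m) sigma i" unfolding beta_num_def by simp
    then show ?thesis unfolding beta_set_def using \<open>i < k\<close> by auto
  qed
qed

lemma runner_count_beta_set_add:
  assumes "length sigma \<le> k" "r < s"
  shows "runner_count s (beta_set (k + s) sigma) r = Suc (runner_count s (beta_set k sigma) r)"
proof -
  have "{x \<in> beta_set (k + s) sigma. x mod s = r} =
      insert r ((\<lambda>x. x + s) ` {x \<in> beta_set k sigma. x mod s = r})"
    unfolding beta_set_add[OF assms(1)] using assms(2) by auto
  moreover have "r \<notin> (\<lambda>x. x + s) ` {x \<in> beta_set k sigma. x mod s = r}" using assms(2) by auto
  ultimately show ?thesis unfolding runner_count_def by (simp add: card_image)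
qed

lemma of_nat_runner_count_beta_set_diff:
  assumes "r < s" "length sigma \<le> i + m * s" "length sigma \<le> i + n * s"
  shows "(of_nat (runner_count s (beta_set (i + n * s) sigma) r) :: 'a::ring_1) - of_nat n =
    of_nat (runner_count s (beta_set (i + m * s) sigma) r) - of_nat m"
proof -
  have step: "runner_count s (beta_set (i + (a + d) * s) sigma) r =
      runner_count s (beta_set (i + a * s) sigma) r + d" if "length sigma \<le> i + a * s" for a d
  proof (induction d)
    case (Suc d)
    have eq: "i + (a + Suc d) * s = (i + (a + d) * s) + s" by simp
    have "runner_count s (beta_set ((i + (a + d) * s) + s) sigma) r =
        Suc (runner_count s (beta_set (i + (a + d) * s) sigma) r)"
    proof (rule runner_count_beta_set_add[OF _ assms(1)])
      have "i + a * s \<le> i + (a + d) * s" by (simp add: mult_le_mono1)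
      then show "length sigma \<le> i + (a + d) * s" using that by linarith
    qed
    then show ?case unfolding eq using Suc.IH by simp
  qed simp
  show ?thesis
  proof (cases "m \<le> n")
    case True
    then show ?thesis using step[OF assms(2), of "n - m"] by (simp add: algebra_simps)
  next
    case False
    then show ?thesis using step[OF assms(3), of "m - n"] by (simp add: algebra_simps)
  qed
qed

lemma of_nat_choose_eq_prod:
  "(of_nat ((D + m) choose D) :: 'a::field_char_0) = (\<Prod>j<m. of_nat D + of_nat j + 1) / fact m"
proof -
  have "(D + m) choose D = (D + m) choose m" using binomial_symmetric[of D "D + m"] by simp
  then have "(of_nat ((D + m) choose D) :: 'a) = of_nat (D + m) gchoose m"
    by (simp add: binomial_gbinomial)
  also have "\<dots> = pochhammer (of_nat D + 1) m / fact m" by (simp add: gbinomial_pochhammer')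
  also have "\<dots> = (\<Prod>j<m. of_nat D + of_nat j + 1) / fact m"
    by (simp add: pochhammer_prod atLeast0LessThan add_ac)
  finally show ?thesis .
qed

lemma degree_lead_coeff_prod_monic_linear:
  fixes c :: "'b \<Rightarrow> 'a::idom"
  assumes "finite A"
  shows "degree (\<Prod>x\<in>A. [:c x, 1:]) = card A" and "lead_coeff (\<Prod>x\<in>A. [:c x, 1:]) = 1"
proof -
  show "degree (\<Prod>x\<in>A. [:c x, 1:]) = card A"
    using assms by (simp add: degree_prod_eq_sum_degree)
  show "lead_coeff (\<Prod>x\<in>A. [:c x, 1:]) = 1" by (subst lead_coeff_prod) simp
qed

lemma binomial_product_polynomial:
  fixes e :: "nat \<Rightarrow> 'a::field_char_0"
  shows "\<exists>P. (\<forall>x. (\<Prod>\<rho><s. (\<Prod>j<m. x + e \<rho> + of_nat j + 1) / fact m) = poly P x) \<and>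
    degree P = s * m \<and> lead_coeff P = 1 / fact m ^ s"
proof -
  define c where "c = (\<lambda>(\<rho>, j). e \<rho> + of_nat j + 1 :: 'a)"
  define P where "P = smult (1 / fact m ^ s) (\<Prod>x\<in>{..<s} \<times> {..<m}. [:c x, 1:])"
  have "(\<Prod>\<rho><s. (\<Prod>j<m. x + e \<rho> + of_nat j + 1) / fact m) = poly P x" for x
  proof -
    have "(\<Prod>\<rho><s. (\<Prod>j<m. x + e \<rho> + of_nat j + 1) / fact m) =
        (\<Prod>\<rho><s. \<Prod>j<m. x + e \<rho> + of_nat j + 1) / fact m ^ s"
      by (simp add: prod_dividef)
    also have "\<dots> = poly P x"
      by (simp add: P_def c_def prod.cartesian_product poly_prod case_prod_beta add_ac)
    finally show ?thesis .
  qed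
  moreover have "degree P = s * m" "lead_coeff P = 1 / fact m ^ s"
    using degree_lead_coeff_prod_monic_linear[of "{..<s} \<times> {..<m}" c] unfolding P_def by simp_all
  ultimately show ?thesis by blast
qed

lemma quasipolynomial_of_residues:
  fixes f :: "nat \<Rightarrow> 'a::comm_ring_1"
  assumes "0 < s"
    and "\<And>i. i < s \<Longrightarrow> \<exists>P. (\<forall>n. k0 \<le> i + n * s \<longrightarrow> f (i + n * s) = poly P (of_nat n)) \<and>
      degree P = D \<and> lead_coeff P = c"
  shows "\<exists>Q. (\<forall>i<s. \<exists>P. (\<forall>n. Q (i + n * s) = poly P (of_nat n)) \<and>
      degree P = D \<and> lead_coeff P = c) \<and> (\<forall>k \<ge> k0. f k = Q k)"
proof -
  obtain P where P: "\<And>i. i < s \<Longrightarrow> (\<forall>n. k0 \<le> i + n * s \<longrightarrow> f (i + n * s) = poly (P i) (of_nat n)) \<and>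
      degree (P i) = D \<and> lead_coeff (P i) = c"
    using assms(2) by metis
  define Q where "Q k = poly (P (k mod s)) (of_nat (k div s))" for k
  have "Q (i + n * s) = poly (P i) (of_nat n)" if "i < s" for i n
    unfolding Q_def using that by simp
  moreover have "f k = Q k" if "k0 \<le> k" for k
    using P[of "k mod s"] that assms(1) div_mult_mod_eq[of k s] unfolding Q_def
    by (metis add.commute mod_less_divisor)
  ultimately show ?thesis using P by blast
qed

lemma card_cores_with_core_polynomial:
  assumes "0 < s" "0 < t" "is_core s sigma" "i < s"
  shows "\<exists>P :: rat poly.
    (\<forall>n. length sigma \<le> i + n * s \<longrightarrow>
      of_nat (card {la. is_core (s * t) la \<and> core s la = sigma \<and> length la \<le> i + n * s}) =
      poly P (of_nat n)) \<and>
    degree P = s * (t - 1) \<and> lead_coeff P = 1 / fact (t - 1) ^ s"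
proof -
  let ?l = "length sigma"
  let ?d = "\<lambda>n \<rho>. runner_count s (beta_set (i + n * s) sigma) \<rho>"
  define e where "e \<rho> = (of_nat (?d ?l \<rho>) :: rat) - of_nat ?l" for \<rho>
  obtain P :: "rat poly" where P:
    "\<And>x. (\<Prod>\<rho><s. (\<Prod>j<t - 1. x + e \<rho> + of_nat j + 1) / fact (t - 1)) = poly P x"
    "degree P = s * (t - 1)" "lead_coeff P = 1 / fact (t - 1) ^ s"
    using binomial_product_polynomial by blast
  have "of_nat (card {la. is_core (s * t) la \<and> core s la = sigma \<and> length la \<le> i + n * s}) =
      poly P (of_nat n)" if n: "?l \<le> i + n * s" for n
  proof -
    have "?l \<le> i + ?l * s" using assms(1) by (simp add: trans_le_add2)
    then have d: "of_nat (?d n \<rho>) = of_nat n + e \<rho>" if "\<rho> < s" for \<rho>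
      using of_nat_runner_count_beta_set_diff[OF that _ n, where 'a = rat] unfolding e_def
      by (simp add: algebra_simps)
    have "of_nat (card {la. is_core (s * t) la \<and> core s la = sigma \<and> length la \<le> i + n * s})
        = (\<Prod>\<rho><s. of_nat ((?d n \<rho> + (t - 1)) choose ?d n \<rho>) :: rat)"
      using card_cores_with_core[OF assms(1-3) n] assms(2) by simp
    also have "\<dots> = (\<Prod>\<rho><s. (\<Prod>j<t - 1. of_nat (?d n \<rho>) + of_nat j + 1) / fact (t - 1))"
      by (simp only: of_nat_choose_eq_prod)
    also have "\<dots> = poly P (of_nat n)"
      using d P(1)[of "of_nat n"] by (simp add: add_ac)
    finally show ?thesis .
  qed
  then show ?thesis using P(2,3) by blast
qed

theorem theorem4:
  fixes s t :: nat and sigma :: "nat list"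
  assumes "0 < s" and "0 < t"
    and "is_core s sigma"
  shows "\<exists>Q :: nat \<Rightarrow> rat.
           (\<forall>i<s. \<exists>P :: rat poly.
               (\<forall>n. Q (i + n * s) = poly P (of_nat n)) \<and>
               degree P = s * (t - 1) \<and>
               lead_coeff P = 1 / (fact (t - 1)) ^ s) \<and>
           (\<forall>k \<ge> length sigma.
               of_nat (card {la. is_core (s * t) la \<and> core s la = sigma \<and> length la \<le> k}) = Q k)"
  using quasipolynomial_of_residues[OF assms(1),
      where f = "\<lambda>k. of_nat (card {la. is_core (s * t) la \<and> core s la = sigma \<and> length la \<le> k})"]
    card_cores_with_core_polynomial[OF assms] by blast

end
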